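(* Let $X,Y$ be Polish spaces and $f\colon X\to Y$ continuous. Then $f$ is category-preserving if and only if the set of points of $X$ which are locally dense for $f$ is dense in $X$.
   Context: A continuous map $f\colon X\to Y$ between Polish spaces is category-preserving if $f^{-1}(A)$ is meager in $X$ for every meager $A\subseteq Y$ (equivalently, $f(U)$ is non-meager, or equivalently somewhere dense, for every nonempty open $U\subseteq X$). A point $x\in X$ is locally dense for $f$ if for every neighborhood $U$ of $x$ the set $\overline{f(U)}$ is a neighborhood of $f(x)$. *)

theory Defs
  imports "HOL-Analysis.Analysis"
begin

definition nowhere_dense :: "'a::topological_space set \<Rightarrow> bool" where
  "nowhere_dense A \<longleftrightarrow> interior (closure A) = {}"

definition meager :: "'a::topological_space set \<Rightarrow> bool" where
  "meager A \<longleftrightarrow> (\<exists>\<F>. countable \<F> \<and> (\<forall>B\<in>\<F>. nowhere_dense B) \<and> A \<subseteq> \<Union>\<F>)"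

definition category_preserving :: "('a::topological_space \<Rightarrow> 'b::topological_space) \<Rightarrow> bool" where
  "category_preserving f \<longleftrightarrow> (\<forall>A. meager A \<longrightarrow> meager (f -` A))"

definition locally_dense_point :: "('a::topological_space \<Rightarrow> 'b::topological_space) \<Rightarrow> 'a \<Rightarrow> bool" where
  "locally_dense_point f x \<longleftrightarrow>
     (\<forall>U. open U \<and> x \<in> U \<longrightarrow> f x \<in> interior (closure (f ` U)))"

end

theory Submission
  imports Defs
begin

text \<open>If x is not locally dense, then for some basic open b around x the point f x lies on
  the frontier of the closed set closure (f ` b). Such frontiers are nowhere dense, so for a
  category-preserving f and a countable basis the points that are not locally dense form a
  meager set, whose complement is dense by Baire's theorem.
  Conversely, if locally dense points are dense and N is nowhere dense, an open set inside
  f -` closure N would contain a locally dense point x, putting f x into the empty interior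
  of closure N; so f pulls nowhere dense sets, hence meager sets, back to such sets.\<close>

lemma meager_subset: "meager B \<Longrightarrow> A \<subseteq> B \<Longrightarrow> meager A"
  unfolding meager_def by (meson subset_trans)

lemma nowhere_dense_imp_meager: "nowhere_dense A \<Longrightarrow> meager A"
  unfolding meager_def by (intro exI[of _ "{A}"]) simp

lemma meager_UN:
  assumes "countable I" and "\<And>i. i \<in> I \<Longrightarrow> meager (M i)"
  shows "meager (\<Union>i\<in>I. M i)"
proof -
  have "\<forall>i\<in>I. \<exists>F. countable F \<and> (\<forall>B\<in>F. nowhere_dense B) \<and> M i \<subseteq> \<Union>F"
    using assms(2) unfolding meager_def by blast
  then obtain F where F: "\<And>i. i \<in> I \<Longrightarrow> countable (F i)"
      "\<And>i. i \<in> I \<Longrightarrow> \<forall>B\<in>F i. nowhere_dense B" "\<And>i. i \<in> I \<Longrightarrow> M i \<subseteq> \<Union>(F i)"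
    by metis
  show ?thesis
    unfolding meager_def
  proof (intro exI conjI)
    show "countable (\<Union>i\<in>I. F i)"
      using assms(1) F(1) by (rule countable_UN)
    show "\<forall>B\<in>\<Union>i\<in>I. F i. nowhere_dense B"
      using F(2) by blast
    show "(\<Union>i\<in>I. M i) \<subseteq> \<Union>(\<Union>i\<in>I. F i)"
      using F(3) by blast
  qed
qed

lemma nowhere_dense_frontier_closed:
  assumes "closed C"
  shows "nowhere_dense (frontier C)"
proof -
  have "interior (frontier C) \<subseteq> interior C"
    using assms by (intro interior_mono) (simp add: frontier_subset_closed)
  moreover have "interior (frontier C) \<subseteq> - interior C"
    using interior_subset[of "frontier C"] by (auto simp: frontier_def)
  ultimately show ?thesis
    unfolding nowhere_dense_def closure_closed[OF frontier_closed] by blast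
qed

lemma meager_interior_empty:
  fixes A :: "'a::complete_space set"
  assumes "meager A"
  shows "interior A = {}"
proof -
  obtain F where F: "countable F" "\<forall>B\<in>F. nowhere_dense B" "A \<subseteq> \<Union>F"
    using assms unfolding meager_def by blast
  have "euclidean interior_of \<Union>(closure ` F) = {}"
    using completely_metrizable_space_euclidean F(1,2)
    by (intro Baire_category_alt) (auto simp: nowhere_dense_def)
  moreover have "A \<subseteq> \<Union>(closure ` F)"
    using F(3) closure_subset by blast
  ultimately show ?thesis
    using interior_mono[of A "\<Union>(closure ` F)"] by simp
qed

corollary dense_Compl_meager:
  fixes A :: "'a::complete_space set"
  shows "meager A \<Longrightarrow> closure (- A) = UNIV"
  by (simp add: closure_interior meager_interior_empty)

lemma not_locally_dense_subset_vimage_frontiers: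
  assumes "topological_basis \<B>"
  shows "{x. \<not> locally_dense_point f x} \<subseteq> (\<Union>b\<in>\<B>. f -` frontier (closure (f ` b)))"
proof
  fix x assume "x \<in> {x. \<not> locally_dense_point f x}"
  then obtain U where U: "open U" "x \<in> U" "f x \<notin> interior (closure (f ` U))"
    unfolding locally_dense_point_def by auto
  obtain b where b: "b \<in> \<B>" "x \<in> b" "b \<subseteq> U"
    using topological_basisE[OF assms U(1,2)] by blast
  have "interior (closure (f ` b)) \<subseteq> interior (closure (f ` U))"
    using b(3) by (intro interior_mono closure_mono image_mono)
  moreover have "f x \<in> closure (f ` b)"
    using b(2) closure_subset[of "f ` b"] by blast
  ultimately have "f x \<in> frontier (closure (f ` b))"
    unfolding frontier_def using U(3) by auto
  then show "x \<in> (\<Union>b\<in>\<B>. f -` frontier (closure (f ` b)))"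
    using b(1) by blast
qed

lemma category_preserving_imp_meager_not_locally_dense:
  fixes f :: "'a::second_countable_topology \<Rightarrow> 'b::topological_space"
  assumes "category_preserving f"
  shows "meager {x. \<not> locally_dense_point f x}"
proof -
  obtain \<B> :: "'a set set" where \<B>: "countable \<B>" "topological_basis \<B>"
    using ex_countable_basis by blast
  have "meager (f -` frontier (closure (f ` b)))" for b
    using assms unfolding category_preserving_def
    by (simp add: nowhere_dense_imp_meager nowhere_dense_frontier_closed)
  then have "meager (\<Union>b\<in>\<B>. f -` frontier (closure (f ` b)))"
    by (intro meager_UN \<B>(1))
  then show ?thesis
    using not_locally_dense_subset_vimage_frontiers[OF \<B>(2)] by (rule meager_subset)
qed

lemma nowhere_dense_vimage_if_locally_dense_points_dense:
  fixes f :: "'a::topological_space \<Rightarrow> 'b::topological_space"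
  assumes cont: "continuous_on UNIV f"
    and dense: "closure {x. locally_dense_point f x} = UNIV"
    and N: "nowhere_dense N"
  shows "nowhere_dense (f -` N)"
proof -
  define V where "V = interior (f -` closure N)"
  have "V = {}"
  proof (rule ccontr)
    assume "V \<noteq> {}"
    then obtain x where x: "x \<in> V" "locally_dense_point f x"
      using dense open_Int_closure_eq_empty[of V "{x. locally_dense_point f x}"]
      unfolding V_def by auto
    have "closure (f ` V) \<subseteq> closure N"
      using interior_subset[of "f -` closure N"] unfolding V_def
      by (intro closure_minimal) auto
    moreover have "f x \<in> interior (closure (f ` V))"
      using x unfolding locally_dense_point_def V_def by simp
    ultimately have "f x \<in> interior (closure N)"
      using interior_mono by blast
    then show False
      using N unfolding nowhere_dense_def by simp
  qed
  moreover have "closure (f -` N) \<subseteq> f -` closure N"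
    using closed_vimage[OF closed_closure cont] closure_subset[of N]
    by (intro closure_minimal) auto
  ultimately show ?thesis
    unfolding nowhere_dense_def V_def using interior_mono by blast
qed

lemma category_preservingI:
  fixes f :: "'a::topological_space \<Rightarrow> 'b::topological_space"
  assumes "\<And>N. nowhere_dense N \<Longrightarrow> nowhere_dense (f -` N)"
  shows "category_preserving f"
  unfolding category_preserving_def
proof (intro allI impI)
  fix A :: "'b set"
  assume "meager A"
  then obtain \<F> where \<F>: "countable \<F>" "\<forall>B\<in>\<F>. nowhere_dense B" "A \<subseteq> \<Union>\<F>"
    unfolding meager_def by auto
  show "meager (f -` A)"
    unfolding meager_def
  proof (intro exI conjI)
    show "countable ((-`) f ` \<F>)"
      using \<F>(1) by simp
    show "\<forall>B\<in>(-`) f ` \<F>. nowhere_dense B"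
      using \<F>(2) assms by blast
    show "f -` A \<subseteq> \<Union>((-`) f ` \<F>)"
      using \<F>(3) by blast
  qed
qed

theorem mainTheorem7:
  fixes f :: "'a::polish_space \<Rightarrow> 'b::polish_space"
  assumes "continuous_on UNIV f"
  shows "category_preserving f \<longleftrightarrow> closure {x. locally_dense_point f x} = UNIV"
proof
  assume "category_preserving f"
  then have "meager {x. \<not> locally_dense_point f x}"
    by (rule category_preserving_imp_meager_not_locally_dense)
  then show "closure {x. locally_dense_point f x} = UNIV"
    using dense_Compl_meager by (fastforce simp: Collect_neg_eq)
next
  assume "closure {x. locally_dense_point f x} = UNIV"
  then show "category_preserving f"
    using assms by (intro category_preservingI nowhere_dense_vimage_if_locally_dense_points_dense)
qed

end
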